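(* Let $R$ be a generalized Rickart $*$-ring and let $B$ be a $*$-subring of $R$ such that (1) $B$ has a unity element, and (2) for every $x\in B$, $GRP(x)\in B$ (where $GRP(x)$ is a generalized right projection of $x$ in $R$). Then $B$ is a generalized Rickart $*$-ring.
   Context: A $*$-ring is an associative ring $R$ with an involution $x\mapsto x^*$ (additive, $(xy)^*=y^*x^*$, $x^{**}=x$); a $*$-subring is a subring closed under $*$. A projection is an element $e$ with $e=e^*=e^2$. For $a$ in a ring $S$, $r(a)=\{b\in S: ab=0\}$. A $*$-ring $S$ is a generalized Rickart $*$-ring if for every $x\in S$ there exist a positive integer $n$ and a projection $g\in S$ with $r(x^n)=gS$. A projection $e\in R$ is a generalized right projection of $x\in R$, written $GRP(x)=e$, if there exists $n\in\mathbb N$ with $x^ne=x^n$ and, for all $y\in R$, $x^ny=0$ implies $ey=0$. *)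

theory Defs
  imports Main
begin

text \<open>Rings are the (not necessarily unital) associative rings of class ring.
  The involution is an explicit function.\<close>

definition star_ring :: "('a::ring \<Rightarrow> 'a) \<Rightarrow> bool" where
  "star_ring st \<longleftrightarrow> (\<forall>x y. st (x + y) = st x + st y) \<and>
     (\<forall>x y. st (x * y) = st y * st x) \<and> (\<forall>x. st (st x) = x)"

definition star_subring :: "('a::ring \<Rightarrow> 'a) \<Rightarrow> 'a set \<Rightarrow> bool" where
  "star_subring st B \<longleftrightarrow> 0 \<in> B \<and> (\<forall>x\<in>B. \<forall>y\<in>B. x + y \<in> B \<and> x * y \<in> B) \<and>
     (\<forall>x\<in>B. - x \<in> B \<and> st x \<in> B)"

text \<open>Positive powers (no unity needed): ppow x n = x^n for n >= 1
  (the value at n = 0 is irrelevant and never used).\<close>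
fun ppow :: "'a::times \<Rightarrow> nat \<Rightarrow> 'a" where
  "ppow x 0 = x"
| "ppow x (Suc 0) = x"
| "ppow x (Suc (Suc n)) = x * ppow x (Suc n)"

definition is_projection :: "('a::ring \<Rightarrow> 'a) \<Rightarrow> 'a \<Rightarrow> bool" where
  "is_projection st e \<longleftrightarrow> e = st e \<and> e * e = e"

text \<open>A *-ring with carrier S (S = UNIV for the whole ring, or a *-subring)
  is a generalized Rickart *-ring: for every x in S there are n >= 1 and a
  projection g in S with r(x^n) = gS, annihilator computed in S.\<close>
definition gen_rickart_on :: "('a::ring \<Rightarrow> 'a) \<Rightarrow> 'a set \<Rightarrow> bool" where
  "gen_rickart_on st S \<longleftrightarrow> (\<forall>x\<in>S. \<exists>n>0. \<exists>g\<in>S. is_projection st g \<and>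
      {y\<in>S. ppow x n * y = 0} = {g * s | s. s \<in> S})"

definition is_GRP :: "('a::ring \<Rightarrow> 'a) \<Rightarrow> 'a \<Rightarrow> 'a \<Rightarrow> bool" where
  "is_GRP st x e \<longleftrightarrow> is_projection st e \<and>
     (\<exists>n>0. ppow x n * e = ppow x n \<and> (\<forall>y. ppow x n * y = 0 \<longrightarrow> e * y = 0))"

end

theory Submission
  imports Defs
begin

text \<open>Let \<open>u\<close> be the unity of \<open>B\<close> and \<open>e = GRP(x) \<in> B\<close>, with \<open>x\<^sup>n e = x\<^sup>n\<close> and
  \<open>r(x\<^sup>n) \<subseteq> r(e)\<close>. Then \<open>g = u - e\<close> is a projection of \<open>B\<close>, and it generates the right
  annihilator of \<open>x\<^sup>n\<close> in \<open>B\<close>: \<open>x\<^sup>n g = x\<^sup>n - x\<^sup>n e = 0\<close>, while \<open>x\<^sup>n y = 0\<close> with \<open>y \<in> B\<close>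
  forces \<open>e y = 0\<close>, i.e. \<open>y = g y\<close>.\<close>

lemma ppow_closed:
  assumes "\<And>a b. a \<in> B \<Longrightarrow> b \<in> B \<Longrightarrow> a * b \<in> B" and "x \<in> B"
  shows "ppow x n \<in> B"
  using assms by (induction x n rule: ppow.induct) auto

lemma star_subring_mult_closed:
  "star_subring st B \<Longrightarrow> a \<in> B \<Longrightarrow> b \<in> B \<Longrightarrow> a * b \<in> B"
  unfolding star_subring_def by blast

lemma star_subring_diff_closed:
  "star_subring st B \<Longrightarrow> a \<in> B \<Longrightarrow> b \<in> B \<Longrightarrow> a - b \<in> B"
  unfolding star_subring_def diff_conv_add_uminus by blast

lemma star_ring_zero:
  assumes "star_ring st"
  shows "st 0 = 0"
  using assms unfolding star_ring_def by (metis add_cancel_right_right add_0)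

lemma star_ring_uminus:
  assumes "star_ring st"
  shows "st (- y) = - st y"
proof -
  have "st (- y) + st y = 0"
    using assms star_ring_zero[OF assms] unfolding star_ring_def by (metis add.left_inverse)
  then show ?thesis
    by (simp add: eq_neg_iff_add_eq_0)
qed

lemma star_ring_diff:
  assumes "star_ring st"
  shows "st (a - b) = st a - st b"
proof -
  have "st (a + - b) = st a + st (- b)"
    using assms unfolding star_ring_def by blast
  then show ?thesis
    by (simp only: diff_conv_add_uminus star_ring_uminus[OF assms])
qed

lemma star_subring_unity_projection:
  assumes "star_ring st" and "star_subring st B"
    and "u \<in> B" and unity: "\<And>b. b \<in> B \<Longrightarrow> u * b = b \<and> b * u = b"
  shows "is_projection st u"
proof -
  have "st u \<in> B"
    using assms(2,3) unfolding star_subring_def by blast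
  then have "u * st u = st u"
    using unity by blast
  moreover have "st (u * st u) = u * st u"
    using assms(1) unfolding star_ring_def by simp
  moreover have "st (st u) = u"
    using assms(1) unfolding star_ring_def by simp
  ultimately show ?thesis
    unfolding is_projection_def using unity[OF assms(3)] by metis
qed

lemma projection_diff:
  assumes "star_ring st" and "is_projection st u" and "is_projection st e"
    and "u * e = e" and "e * u = e"
  shows "is_projection st (u - e)"
proof -
  have "st (u - e) = u - e"
    using assms(2,3) star_ring_diff[OF assms(1)] unfolding is_projection_def by metis
  moreover have "(u - e) * (u - e) = u - e"
    using assms(2-5) unfolding is_projection_def by (simp add: algebra_simps)
  ultimately show ?thesis
    unfolding is_projection_def by simp
qed

lemma right_annihilator_eq_complement:
  fixes B :: "'a::ring set"
  assumes mult_closed: "\<And>a b. a \<in> B \<Longrightarrow> b \<in> B \<Longrightarrow> a * b \<in> B"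
    and diff_closed: "\<And>a b. a \<in> B \<Longrightarrow> b \<in> B \<Longrightarrow> a - b \<in> B"
    and unity: "\<And>b. b \<in> B \<Longrightarrow> u * b = b \<and> b * u = b"
    and "a \<in> B" and "u \<in> B" and "e \<in> B"
    and "a * e = a" and ann: "\<And>y. a * y = 0 \<Longrightarrow> e * y = 0"
  shows "{y \<in> B. a * y = 0} = {(u - e) * s | s. s \<in> B}"
proof (intro set_eqI iffI)
  fix y
  assume "y \<in> {y \<in> B. a * y = 0}"
  then have "y \<in> B" and "e * y = 0"
    using ann by auto
  then have "(u - e) * y = y"
    using unity[OF \<open>y \<in> B\<close>] by (simp add: left_diff_distrib)
  with \<open>y \<in> B\<close> show "y \<in> {(u - e) * s | s. s \<in> B}"
    by force
next
  fix y
  assume "y \<in> {(u - e) * s | s. s \<in> B}"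
  then obtain s where "s \<in> B" and y: "y = (u - e) * s"
    by blast
  have "a * (u - e) = 0"
    using unity[OF \<open>a \<in> B\<close>] \<open>a * e = a\<close> by (simp add: algebra_simps)
  then have "a * y = 0"
    unfolding y by (metis mult.assoc mult_zero_left)
  moreover have "y \<in> B"
    using y \<open>s \<in> B\<close> \<open>u \<in> B\<close> \<open>e \<in> B\<close> mult_closed diff_closed by blast
  ultimately show "y \<in> {y \<in> B. a * y = 0}"
    by blast
qed

theorem mainTheorem4:
  fixes st :: "'a::ring \<Rightarrow> 'a" and B :: "'a set"
  assumes "star_ring st"
    and "gen_rickart_on st UNIV"
    and "star_subring st B"
    and "\<exists>u\<in>B. \<forall>b\<in>B. u * b = b \<and> b * u = b"
    and "\<forall>x\<in>B. \<exists>e\<in>B. is_GRP st x e"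
  shows "gen_rickart_on st B"
  unfolding gen_rickart_on_def
proof
  fix x
  assume "x \<in> B"
  from assms(4) obtain u where "u \<in> B" and unity: "\<And>b. b \<in> B \<Longrightarrow> u * b = b \<and> b * u = b"
    by blast
  from assms(5) \<open>x \<in> B\<close> obtain e where "e \<in> B" and "is_GRP st x e"
    by blast
  then obtain n where "n > 0" and "is_projection st e" and "ppow x n * e = ppow x n"
    and ann: "\<And>y. ppow x n * y = 0 \<Longrightarrow> e * y = 0"
    unfolding is_GRP_def by blast
  note mult_closed = star_subring_mult_closed[OF assms(3)]
  note diff_closed = star_subring_diff_closed[OF assms(3)]
  have "is_projection st (u - e)"
    using projection_diff assms(1) star_subring_unity_projection[OF assms(1,3) \<open>u \<in> B\<close> unity]
      \<open>is_projection st e\<close> unity[OF \<open>e \<in> B\<close>] by blast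
  moreover have "{y \<in> B. ppow x n * y = 0} = {(u - e) * s | s. s \<in> B}"
    using right_annihilator_eq_complement[OF mult_closed diff_closed unity
        ppow_closed[OF mult_closed \<open>x \<in> B\<close>] \<open>u \<in> B\<close> \<open>e \<in> B\<close> \<open>ppow x n * e = ppow x n\<close> ann]
    by blast
  ultimately show "\<exists>n>0. \<exists>g\<in>B. is_projection st g \<and>
      {y \<in> B. ppow x n * y = 0} = {g * s | s. s \<in> B}"
    using \<open>n > 0\<close> diff_closed[OF \<open>u \<in> B\<close> \<open>e \<in> B\<close>] by blast
qed

end
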